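(* Let $(G,k,M^*,M)$ be a critical tuple and fix an edge $e\in E^+(C^+)$. Let $e_s,e_f$ be distinct edges of $C^+$ lying on $C_e$ and let $\mathcal{P}=C_e[e_s,e_f]$ be the sub-path of $C_e$ from $e_s$ to $e_f$ (inclusive). Then either $C^+[e_s,e_f]\subseteq r_f(\mathcal{P})$ or $C^+[e_f,e_s]\subseteq r_b(\mathcal{P})$.
   Context: $R(H)$ is the set of red edges of an edge set $H$. For a perfect matching $M$ of a red/blue edge-colored bipartite graph $G=(A\sqcup B,E)$, $G_M$ is the directed graph on $A\sqcup B$ with edges of $M$ oriented from $A$ to $B$ and other edges from $B$ to $A$, weighted by $w_M(e)=0$ for blue $e$, $-1$ for red $e\in M$, $+1$ for red $e\notin M$; $E^+(H)$ (resp. $E^-(H)$) is the set of red edges of $H$ not in $M$ (resp. in $M$), $w_M(H)=|E^+(H)|-|E^-(H)|$. Paths and cycles are directed and identified with edge sets. For a directed cycle $C$ and sub-paths/edges $P_1,P_2$ of it, $C[P_1,P_2]$ is the sub-path of $C$ from $P_1$ to $P_2$, both included. For an edge $e$, $M^e$ is a perfect matching containing $e$ with the minimum number of red edges among those containing $e$. A tuple $(G,k,M^*,M)$ is critical if: every edge of $G$ lies in some perfect matching; $|R(M^* )|=k$; $|R(M)|<\frac13k$; every directed cycle $C$ of $G_M$ with $w_M(C)>0$ has $|E^+(C)|>\frac23k$; and $|R(M^e)|<\frac13k$ for every red $e\in M^*\setminus M$. $C^+$ is the unique positive-weight directed cycle of $G_M$ contained in $M\Delta M^*$. For $e\in E^+(C^+)$,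 $C_e$ is the unique directed cycle of $G_M$ in $M\Delta M^e$ containing $e$. A jump of $C_e$ is a sub-path $Q$ of $C_e$ with endpoints on $C^+$, no inner vertex on $C^+$ and $Q\cap C^+=\emptyset$; interjumps are the sub-paths of $C_e$ contained in $C^+$ between consecutive jumps. For a jump $Q$, $C_Q$ is the unique directed cycle in $C^+\cup Q$ containing $Q$; $Q$ is forward if $w_M(C_Q)>0$, backward otherwise; reach $r(Q)=C^+\setminus C_Q$ if forward, $r(Q)=C_Q\setminus Q$ if backward. For a sub-path $\mathcal{P}$ of $C_e$ with endpoints on $C^+$, the forward reach $r_f(\mathcal{P})$ is the union of $\mathcal{P}\cap C^+$ (the parts of interjumps in $\mathcal{P}$) and the reaches of all forward jumps contained in $\mathcal{P}$; the backward reach $r_b(\mathcal{P})$ is the union of the reaches of all backward jumps contained in $\mathcal{P}$. *)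

theory Defs
  imports Complex_Main
begin

text \<open>Bipartite graph G = (A \<union> B, E); an (undirected) edge ab with a in A, b in B is
  represented by the pair (a,b). The red/blue colouring is given by the set red of red
  edges (every other edge of E is blue).\<close>

definition bip_graph :: "'v set \<Rightarrow> 'v set \<Rightarrow> ('v \<times> 'v) set \<Rightarrow> bool" where
  "bip_graph A B E \<longleftrightarrow> finite A \<and> finite B \<and> A \<inter> B = {} \<and> E \<subseteq> A \<times> B"

definition perfect_matching :: "'v set \<Rightarrow> 'v set \<Rightarrow> ('v \<times> 'v) set \<Rightarrow> ('v \<times> 'v) set \<Rightarrow> bool" where
  "perfect_matching A B E M \<longleftrightarrow> M \<subseteq> E \<and>
     (\<forall>a\<in>A. \<exists>!b. (a, b) \<in> M) \<and> (\<forall>b\<in>B. \<exists>!a. (a, b) \<in> M)"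

definition R :: "('v \<times> 'v) set \<Rightarrow> ('v \<times> 'v) set \<Rightarrow> ('v \<times> 'v) set" where
  "R red H = H \<inter> red"

text \<open>Orientation in G_M: edges of M go from A to B, other edges from B to A.\<close>
definition arc_tail :: "('v \<times> 'v) set \<Rightarrow> 'v \<times> 'v \<Rightarrow> 'v" where
  "arc_tail M e = (if e \<in> M then fst e else snd e)"

definition arc_head :: "('v \<times> 'v) set \<Rightarrow> 'v \<times> 'v \<Rightarrow> 'v" where
  "arc_head M e = (if e \<in> M then snd e else fst e)"

definition Eplus :: "('v \<times> 'v) set \<Rightarrow> ('v \<times> 'v) set \<Rightarrow> ('v \<times> 'v) set \<Rightarrow> ('v \<times> 'v) set" where
  "Eplus red M H = R red H - M"

definition Eminus :: "('v \<times> 'v) set \<Rightarrow> ('v \<times> 'v) set \<Rightarrow> ('v \<times> 'v) set \<Rightarrow> ('v \<times> 'v) set" where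
  "Eminus red M H = R red H \<inter> M"

definition wM :: "('v \<times> 'v) set \<Rightarrow> ('v \<times> 'v) set \<Rightarrow> ('v \<times> 'v) set \<Rightarrow> int" where
  "wM red M H = int (card (Eplus red M H)) - int (card (Eminus red M H))"

text \<open>Directed cycles of G_M, identified with their edge sets: a nonempty cyclic sequence of
  edges of G with head of each arc equal to the tail of the next and pairwise distinct
  vertices (tails).\<close>
definition dcycle :: "('v \<times> 'v) set \<Rightarrow> ('v \<times> 'v) set \<Rightarrow> ('v \<times> 'v) set \<Rightarrow> bool" where
  "dcycle E M C \<longleftrightarrow> (\<exists>es. es \<noteq> [] \<and> set es = C \<and> set es \<subseteq> E \<and>
      distinct (map (arc_tail M) es) \<and>
      (\<forall>i<length es. arc_head M (es ! i) = arc_tail M (es ! ((i + 1) mod length es))))"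

definition cyc_succ :: "('v \<times> 'v) set \<Rightarrow> ('v \<times> 'v) set \<Rightarrow> 'v \<times> 'v \<Rightarrow> 'v \<times> 'v" where
  "cyc_succ M C x = (THE y. y \<in> C \<and> arc_tail M y = arc_head M x)"

text \<open>C[x,y]: the sub-path of the directed cycle C from the arc x to the arc y, both included.\<close>
definition cyc_seg :: "('v \<times> 'v) set \<Rightarrow> ('v \<times> 'v) set \<Rightarrow> 'v \<times> 'v \<Rightarrow> 'v \<times> 'v \<Rightarrow> ('v \<times> 'v) set" where
  "cyc_seg M C x y =
     {(cyc_succ M C ^^ i) x | i. i \<le> (LEAST n. (cyc_succ M C ^^ n) x = y)}"

definition verts :: "('v \<times> 'v) set \<Rightarrow> 'v set" where
  "verts H = fst ` H \<union> snd ` H"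

definition is_Me :: "'v set \<Rightarrow> 'v set \<Rightarrow> ('v \<times> 'v) set \<Rightarrow> ('v \<times> 'v) set \<Rightarrow>
    'v \<times> 'v \<Rightarrow> ('v \<times> 'v) set \<Rightarrow> bool" where
  "is_Me A B E red e Me \<longleftrightarrow> perfect_matching A B E Me \<and> e \<in> Me \<and>
     (\<forall>M'. perfect_matching A B E M' \<and> e \<in> M' \<longrightarrow> card (R red Me) \<le> card (R red M'))"

definition critical :: "'v set \<Rightarrow> 'v set \<Rightarrow> ('v \<times> 'v) set \<Rightarrow> ('v \<times> 'v) set \<Rightarrow> nat \<Rightarrow>
    ('v \<times> 'v) set \<Rightarrow> ('v \<times> 'v) set \<Rightarrow> bool" where
  "critical A B E red k Mstar M \<longleftrightarrow>
     bip_graph A B E \<and> red \<subseteq> E \<and>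
     (\<forall>e\<in>E. \<exists>M'. perfect_matching A B E M' \<and> e \<in> M') \<and>
     perfect_matching A B E Mstar \<and> perfect_matching A B E M \<and>
     card (R red Mstar) = k \<and>
     real (card (R red M)) < real k / 3 \<and>
     (\<forall>C. dcycle E M C \<and> wM red M C > 0 \<longrightarrow> real (card (Eplus red M C)) > 2 * real k / 3) \<and>
     (\<forall>e\<in>R red (Mstar - M). \<forall>Me. is_Me A B E red e Me \<longrightarrow> real (card (R red Me)) < real k / 3)"

text \<open>Jumps of Ce with respect to Cp (= C^+): sub-paths Q = Ce[x,y] whose endpoints lie on Cp,
  with no inner vertex on Cp and no edge in Cp.\<close>
definition is_jump :: "('v \<times> 'v) set \<Rightarrow> ('v \<times> 'v) set \<Rightarrow> ('v \<times> 'v) set \<Rightarrow> ('v \<times> 'v) set \<Rightarrow> bool" where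
  "is_jump M Cp Ce Q \<longleftrightarrow> (\<exists>x y. x \<in> Ce \<and> y \<in> Ce \<and> Q = cyc_seg M Ce x y \<and>
      arc_tail M x \<in> verts Cp \<and> arc_head M y \<in> verts Cp \<and>
      (\<forall>z\<in>Q - {y}. arc_head M z \<notin> verts Cp) \<and> Q \<inter> Cp = {})"

definition jump_cycle :: "('v \<times> 'v) set \<Rightarrow> ('v \<times> 'v) set \<Rightarrow> ('v \<times> 'v) set \<Rightarrow> ('v \<times> 'v) set \<Rightarrow> ('v \<times> 'v) set" where
  "jump_cycle E M Cp Q = (THE C. dcycle E M C \<and> C \<subseteq> Cp \<union> Q \<and> Q \<subseteq> C)"

definition forward_jump :: "('v \<times> 'v) set \<Rightarrow> ('v \<times> 'v) set \<Rightarrow> ('v \<times> 'v) set \<Rightarrow> ('v \<times> 'v) set \<Rightarrow> ('v \<times> 'v) set \<Rightarrow> bool" where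
  "forward_jump E red M Cp Q \<longleftrightarrow> wM red M (jump_cycle E M Cp Q) > 0"

definition reach :: "('v \<times> 'v) set \<Rightarrow> ('v \<times> 'v) set \<Rightarrow> ('v \<times> 'v) set \<Rightarrow> ('v \<times> 'v) set \<Rightarrow> ('v \<times> 'v) set \<Rightarrow> ('v \<times> 'v) set" where
  "reach E red M Cp Q =
     (if forward_jump E red M Cp Q then Cp - jump_cycle E M Cp Q
      else jump_cycle E M Cp Q - Q)"

definition reach_f :: "('v \<times> 'v) set \<Rightarrow> ('v \<times> 'v) set \<Rightarrow> ('v \<times> 'v) set \<Rightarrow> ('v \<times> 'v) set \<Rightarrow>
    ('v \<times> 'v) set \<Rightarrow> ('v \<times> 'v) set \<Rightarrow> ('v \<times> 'v) set" where
  "reach_f E red M Cp Ce P = (P \<inter> Cp) \<union>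
     \<Union>{reach E red M Cp Q | Q. is_jump M Cp Ce Q \<and> Q \<subseteq> P \<and> forward_jump E red M Cp Q}"

definition reach_b :: "('v \<times> 'v) set \<Rightarrow> ('v \<times> 'v) set \<Rightarrow> ('v \<times> 'v) set \<Rightarrow> ('v \<times> 'v) set \<Rightarrow>
    ('v \<times> 'v) set \<Rightarrow> ('v \<times> 'v) set \<Rightarrow> ('v \<times> 'v) set" where
  "reach_b E red M Cp Ce P =
     \<Union>{reach E red M Cp Q | Q. is_jump M Cp Ce Q \<and> Q \<subseteq> P \<and> \<not> forward_jump E red M Cp Q}"

end

theory Submission
  imports Defs
begin

(* Walk along C_e from e_s to e_f and record the current position on C^+ as an integer
   index, so that going once around C^+ adds |C^+|.  An arc of C_e that lies on C^+ advances
   the position by one, and that arc belongs to the sub-path P.  A jump Q leaving C^+ at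
   position a and returning at position b, with b < a < b + |C^+|, closes the cycle
   C_Q = Q + C^+[b, a).  If Q is forward, the position advances to b + |C^+|, passing exactly
   the arcs of C^+ - C_Q = r(Q); if Q is backward, it falls back to b, passing exactly the
   arcs of C_Q - Q = r(Q).  Hence every arc passed forward lies in r_f(P) and every arc passed
   backward lies in r_b(P).  The final position is congruent to that of e_f: if it lies
   beyond e_s, the walk has passed C^+[e_s, e_f] forward, otherwise it has passed C^+[e_f, e_s]
   backward. *)

section \<open>Cyclic indexing of lists\<close>

definition cyc_nth :: "'a list \<Rightarrow> int \<Rightarrow> 'a" where
  "cyc_nth xs j = xs ! nat (j mod int (length xs))"

definition cyc_range :: "'a list \<Rightarrow> int \<Rightarrow> int \<Rightarrow> 'a set" where
  "cyc_range xs i j = cyc_nth xs ` {i..<j}"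

definition cyc_slice :: "'a list \<Rightarrow> int \<Rightarrow> int \<Rightarrow> 'a list" where
  "cyc_slice xs i j = map (cyc_nth xs) [i..j - 1]"

lemma cyc_nth_in_set: "xs \<noteq> [] \<Longrightarrow> cyc_nth xs j \<in> set xs"
  by (simp add: cyc_nth_def nat_less_iff)

lemma cyc_nth_of_nat: "i < length xs \<Longrightarrow> cyc_nth xs (int i) = xs ! i"
  by (simp add: cyc_nth_def flip: of_nat_mod)

lemma cyc_nth_add_length [simp]: "cyc_nth xs (j + int (length xs)) = cyc_nth xs j"
  by (simp add: cyc_nth_def)

lemma cyc_nth_eq_iff:
  assumes "distinct xs" "xs \<noteq> []"
  shows "cyc_nth xs j = cyc_nth xs j' \<longleftrightarrow> j mod int (length xs) = j' mod int (length xs)"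
  using assms unfolding cyc_nth_def
  by (simp add: nth_eq_iff_index_eq nat_less_iff eq_nat_nat_iff)

lemma mod_eq_imp_eq_if_close:
  fixes x y L :: int
  assumes "x mod L = y mod L" "\<bar>x - y\<bar> < L"
  shows "x = y"
proof (rule ccontr)
  assume "x \<noteq> y"
  have "L dvd x - y"
    using assms(1) by (simp add: mod_eq_dvd_iff)
  then have "\<bar>L\<bar> \<le> \<bar>x - y\<bar>"
    using \<open>x \<noteq> y\<close> by (intro dvd_imp_le_int) simp_all
  then show False
    using assms(2) by linarith
qed

lemma mod_eq_in_window:
  fixes c f s L :: int
  assumes "c mod L = f mod L" "s < f" "f < s + L"
  shows "s < c \<Longrightarrow> f \<le> c" and "c \<le> s \<Longrightarrow> c \<le> f - L"
proof -
  have "L dvd c - f"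
    using assms(1) by (simp add: mod_eq_dvd_iff)
  then obtain k where k: "c - f = L * k"
    by (rule dvdE)
  have "0 < L"
    using assms(2,3) by simp
  have "0 \<le> k \<Longrightarrow> f \<le> c"
    using k \<open>0 < L\<close> by (simp add: algebra_simps)
  moreover have "k < 0 \<Longrightarrow> c \<le> f - L"
    using k \<open>0 < L\<close> mult_left_mono[of k "-1" L] by simp
  ultimately show "s < c \<Longrightarrow> f \<le> c" and "c \<le> s \<Longrightarrow> c \<le> f - L"
    using assms(2,3) by (cases "0 \<le> k"; linarith)+
qed

lemma obtain_first_hit:
  fixes i m :: int
  assumes "i < m" "P m"
  obtains j where "i < j" "j \<le> m" "P j" "\<And>t. i < t \<Longrightarrow> t < j \<Longrightarrow> \<not> P t"
proof -
  obtain k where k: "k \<le> nat (m - i - 1)" "\<forall>d<k. \<not> P (i + 1 + int d)" "P (i + 1 + int k)"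
    using ex_least_nat_le[of "\<lambda>d. P (i + 1 + int d)" "nat (m - i - 1)"] assms by auto
  have "\<not> P t" if "i < t" "t < i + 1 + int k" for t
    using k(2)[rule_format, of "nat (t - i - 1)"] that by simp
  then show thesis
    using that[of "i + 1 + int k"] k(1,3) assms(1) by simp
qed

lemma obtain_cyc_nth:
  assumes "x \<in> set xs"
  obtains j where "cyc_nth xs j = x"
  using assms by (metis in_set_conv_nth cyc_nth_of_nat)

lemma obtain_cyc_nth_in_window:  assumes "x \<in> set xs"
  obtains j where "lo \<le> j" "j < lo + int (length xs)" "cyc_nth xs j = x"
proof -
  obtain i where i: "i < length xs" "xs ! i = x"
    using assms by (auto simp: in_set_conv_nth)
  define j where "j = lo + (int i - lo) mod int (length xs)"
  have "j mod int (length xs) = int i"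
    using i(1) by (simp add: j_def mod_add_right_eq)
  then have "cyc_nth xs j = x"
    using i by (simp add: cyc_nth_def)
  moreover have "lo \<le> j" "j < lo + int (length xs)"
  proof -
    have "0 < int (length xs)"
      using i(1) by auto
    then show "lo \<le> j" "j < lo + int (length xs)"
      by (simp_all add: j_def)
  qed
  ultimately show thesis
    using that by blast
qed

lemma obtain_cyc_nth_before:
  assumes "x \<in> set xs" "x \<noteq> cyc_nth xs a"
  obtains b where "b < a" "a < b + int (length xs)" "cyc_nth xs b = x"
proof -
  obtain b where b: "a + 1 - int (length xs) \<le> b" "b < a + 1" "cyc_nth xs b = x"
    using assms(1) by (rule obtain_cyc_nth_in_window[where lo = "a + 1 - int (length xs)"], simp)
  moreover have "b \<noteq> a"
    using assms(2) b(3) by auto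
  ultimately show thesis
    using that[of b] by simp
qed

lemma obtain_cyc_nth_pair:
  assumes "x \<in> set xs" "y \<in> set xs" "x \<noteq> y"
  obtains i j where "cyc_nth xs i = x" "i < j" "j < i + int (length xs)" "cyc_nth xs j = y"
proof -
  obtain i where i: "cyc_nth xs i = x"
    using assms(1) by (rule obtain_cyc_nth)
  obtain j where "i \<le> j" "j < i + int (length xs)" "cyc_nth xs j = y"
    using assms(2) by (rule obtain_cyc_nth_in_window)
  with i assms(3) show thesis
    using that by (auto simp: order_le_less)
qed

lemma cyc_range_subset_union: "cyc_range xs i k \<subseteq> cyc_range xs i j \<union> cyc_range xs j k"
proof -
  have "{i..<k} \<subseteq> {i..<j} \<union> {j..<k}"
    by auto
  then show ?thesis
    unfolding cyc_range_def by (metis image_Un image_mono)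
qed

lemma cyc_range_mono: "i' \<le> i \<Longrightarrow> j \<le> j' \<Longrightarrow> cyc_range xs i j \<subseteq> cyc_range xs i' j'"
  unfolding cyc_range_def by (intro image_mono) auto

lemma cyc_range_empty [simp]: "j \<le> i \<Longrightarrow> cyc_range xs i j = {}"
  by (simp add: cyc_range_def)

lemma cyc_range_single [simp]: "cyc_range xs i (i + 1) = {cyc_nth xs i}"
  unfolding cyc_range_def by (simp add: atLeastLessThanPlusOne_atLeastAtMost_int)

lemma cyc_range_add_length:
  "cyc_range xs (i + int (length xs)) (j + int (length xs)) = cyc_range xs i j"
proof -
  have "cyc_nth xs ` {i + int (length xs)..<j + int (length xs)} =
        (\<lambda>t. cyc_nth xs (t + int (length xs))) ` {i..<j}"
    by (simp flip: image_add_atLeastLessThan' add: image_image)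
  then show ?thesis
    unfolding cyc_range_def by simp
qed

lemma cyc_range_complement:
  assumes "distinct xs" "b \<le> a" "a \<le> b + int (length xs)"
  shows "set xs - cyc_range xs b a = cyc_range xs a (b + int (length xs))"
proof (cases "xs = []")
  case True
  then show ?thesis
    using assms by (simp add: cyc_range_def)
next
  case False
  have "set xs \<subseteq> cyc_range xs b (b + int (length xs))"
    by (auto simp: cyc_range_def elim: obtain_cyc_nth_in_window[where lo = b])
  moreover have "cyc_range xs b a \<inter> cyc_range xs a (b + int (length xs)) = {}"
  proof -
    have "j = j'" if "b \<le> j" "j < a" "a \<le> j'" "j' < b + int (length xs)"
        and "cyc_nth xs j = cyc_nth xs j'" for j j'
      using that mod_eq_imp_eq_if_close[of j "int (length xs)" j']
      by (simp add: cyc_nth_eq_iff[OF assms(1) False])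
    then show ?thesis
      unfolding cyc_range_def by fastforce
  qed
  moreover have "cyc_range xs i j \<subseteq> set xs" for i j
    using False by (auto simp: cyc_range_def cyc_nth_in_set)
  ultimately show ?thesis
    using cyc_range_subset_union[of xs b "b + int (length xs)" a] by blast
qed

lemma set_cyc_slice: "set (cyc_slice xs i j) = cyc_range xs i j"
  unfolding cyc_slice_def cyc_range_def
  using atLeastLessThanPlusOne_atLeastAtMost_int[of i "j - 1"] by simp

lemma hd_cyc_slice: "i < j \<Longrightarrow> hd (cyc_slice xs i j) = cyc_nth xs i"
  by (simp add: cyc_slice_def upto_rec1)

lemma last_cyc_slice: "i < j \<Longrightarrow> last (cyc_slice xs i j) = cyc_nth xs (j - 1)"
  by (simp add: cyc_slice_def upto_rec2 last_map)

section \<open>Directed cycles as arc sequences\<close>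

definition dpath_seq :: "('v \<times> 'v) set \<Rightarrow> ('v \<times> 'v) set \<Rightarrow> ('v \<times> 'v) list \<Rightarrow> bool" where
  "dpath_seq E M ps \<longleftrightarrow> ps \<noteq> [] \<and> set ps \<subseteq> E \<and> distinct (map (arc_tail M) ps) \<and>
     successively (\<lambda>x y. arc_head M x = arc_tail M y) ps"

definition dcycle_seq ::
    "('v \<times> 'v) set \<Rightarrow> ('v \<times> 'v) set \<Rightarrow> ('v \<times> 'v) set \<Rightarrow> ('v \<times> 'v) list \<Rightarrow> bool" where
  "dcycle_seq E M C cs \<longleftrightarrow>
     dpath_seq E M cs \<and> set cs = C \<and> arc_head M (last cs) = arc_tail M (hd cs)"

lemma cyclic_chain_iff:
  assumes "xs \<noteq> []"
  shows "(\<forall>i<length xs. P (xs ! i) (xs ! ((i + 1) mod length xs))) \<longleftrightarrow>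
         successively P xs \<and> P (last xs) (hd xs)"
proof -
  let ?n = "length xs"
  have n: "0 < ?n"
    using assms by simp
  have ends: "last xs = xs ! (?n - 1)" "hd xs = xs ! 0"
    using assms by (simp_all add: last_conv_nth hd_conv_nth)
  have "(\<forall>i<?n. P (xs ! i) (xs ! ((i + 1) mod ?n))) \<longleftrightarrow>
        (\<forall>i. Suc i < ?n \<longrightarrow> P (xs ! i) (xs ! Suc i)) \<and> P (xs ! (?n - 1)) (xs ! 0)"
  proof
    assume H: "\<forall>i<?n. P (xs ! i) (xs ! ((i + 1) mod ?n))"
    have "P (xs ! i) (xs ! Suc i)" if "Suc i < ?n" for i
      using H[rule_format, of i] that by simp
    moreover have "P (xs ! (?n - 1)) (xs ! 0)"
      using H[rule_format, of "?n - 1"] n by simp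
    ultimately show "(\<forall>i. Suc i < ?n \<longrightarrow> P (xs ! i) (xs ! Suc i)) \<and> P (xs ! (?n - 1)) (xs ! 0)"
      by blast
  next
    assume H: "(\<forall>i. Suc i < ?n \<longrightarrow> P (xs ! i) (xs ! Suc i)) \<and> P (xs ! (?n - 1)) (xs ! 0)"
    show "\<forall>i<?n. P (xs ! i) (xs ! ((i + 1) mod ?n))"
    proof (intro allI impI)
      fix i
      assume "i < ?n"
      show "P (xs ! i) (xs ! ((i + 1) mod ?n))"
      proof (cases "Suc i < ?n")
        case True
        then show ?thesis
          using H by simp
      next
        case False
        then have "i = ?n - 1"
          using \<open>i < ?n\<close> by simp
        then show ?thesis
          using H n by simp
      qed
    qed
  qed
  then show ?thesis
    unfolding successively_conv_nth ends .
qed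

lemma dcycle_iff_dcycle_seq: "dcycle E M C \<longleftrightarrow> (\<exists>cs. dcycle_seq E M C cs)"
  unfolding dcycle_def dcycle_seq_def dpath_seq_def
  using cyclic_chain_iff[of _ "\<lambda>x y. arc_head M x = arc_tail M y"] by blast

lemma dcycle_seq_cyclic_chain:
  assumes "dcycle_seq E M C cs"
  shows "\<forall>i<length cs. arc_head M (cs ! i) = arc_tail M (cs ! ((i + 1) mod length cs))"
proof -
  have "cs \<noteq> []" "successively (\<lambda>x y. arc_head M x = arc_tail M y) cs"
    "arc_head M (last cs) = arc_tail M (hd cs)"
    using assms by (simp_all add: dcycle_seq_def dpath_seq_def)
  then show ?thesis
    using cyclic_chain_iff[of cs "\<lambda>x y. arc_head M x = arc_tail M y"] by simp
qed

lemma dcycle_seq_cyc_nth_in: "dcycle_seq E M C cs \<Longrightarrow> cyc_nth cs j \<in> C"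
  unfolding dcycle_seq_def dpath_seq_def using cyc_nth_in_set by blast

lemma dcycle_seq_cyc_range_subset: "dcycle_seq E M C cs \<Longrightarrow> cyc_range cs i j \<subseteq> C"
  unfolding cyc_range_def using dcycle_seq_cyc_nth_in by blast

lemma dcycle_seq_inj_tail: "dcycle_seq E M C cs \<Longrightarrow> inj_on (arc_tail M) C"
  unfolding dcycle_seq_def dpath_seq_def by (auto simp: distinct_map)

lemma head_cyc_nth:
  assumes "dcycle_seq E M C cs"
  shows "arc_head M (cyc_nth cs j) = arc_tail M (cyc_nth cs (j + 1))"
proof -
  let ?L = "int (length cs)"
  have L: "0 < ?L"
    using assms by (simp add: dcycle_seq_def dpath_seq_def)
  have "nat (j mod ?L) < length cs"
    using L by (simp add: nat_less_iff)
  moreover have "(nat (j mod ?L) + 1) mod length cs = nat ((j + 1) mod ?L)"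
  proof -
    have "int ((nat (j mod ?L) + 1) mod length cs) = (j mod ?L + 1) mod ?L"
      using L by (simp add: of_nat_mod add.commute)
    also have "\<dots> = (j + 1) mod ?L"
      by (simp add: mod_add_left_eq)
    finally show ?thesis
      by simp
  qed
  ultimately show ?thesis
    using dcycle_seq_cyclic_chain[OF assms] by (simp add: cyc_nth_def)
qed

lemma tail_cyc_nth_eq_imp_mod_eq:
  assumes "dcycle_seq E M C cs" "arc_tail M (cyc_nth cs j) = arc_tail M (cyc_nth cs j')"
  shows "j mod int (length cs) = j' mod int (length cs)"
proof -
  have cs: "distinct cs" "cs \<noteq> []"
    using assms(1) by (auto simp: dcycle_seq_def dpath_seq_def distinct_map)
  then have "cyc_nth cs j = cyc_nth cs j'"
    using assms dcycle_seq_inj_tail dcycle_seq_cyc_nth_in by (metis inj_onD)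
  then show ?thesis
    using cyc_nth_eq_iff[OF cs] by blast
qed

lemma tail_cyc_nth_inj:
  assumes "dcycle_seq E M C cs" "arc_tail M (cyc_nth cs j) = arc_tail M (cyc_nth cs j')"
    and "\<bar>j - j'\<bar> < int (length cs)"
  shows "j = j'"
  by (rule mod_eq_imp_eq_if_close[OF tail_cyc_nth_eq_imp_mod_eq[OF assms(1,2)] assms(3)])

lemma dcycle_seq_verts:
  assumes "dcycle_seq E M C cs"
  shows "verts C = arc_tail M ` C"
proof
  have "arc_tail M z \<in> {fst z, snd z}" for z
    by (simp add: arc_tail_def)
  then show "arc_tail M ` C \<subseteq> verts C"
    unfolding verts_def by blast
  have head_in: "arc_head M z \<in> arc_tail M ` C" if "z \<in> C" for z
  proof -
    have "z \<in> set cs"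
      using assms that by (simp add: dcycle_seq_def)
    then obtain j where "cyc_nth cs j = z"
      by (rule obtain_cyc_nth)
    then show ?thesis
      using head_cyc_nth[OF assms, of j] dcycle_seq_cyc_nth_in[OF assms, of "j + 1"] by simp
  qed
  show "verts C \<subseteq> arc_tail M ` C"
  proof
    fix w
    assume "w \<in> verts C"
    then obtain z where z: "z \<in> C" "w = fst z \<or> w = snd z"
      by (auto simp: verts_def)
    then have "w = arc_tail M z \<or> w = arc_head M z"
      by (auto simp: arc_tail_def arc_head_def)
    then show "w \<in> arc_tail M ` C"
      using head_in z(1) by blast
  qed
qed

lemma cyc_succ_eqI:
  assumes "dcycle_seq E M C cs" "y \<in> C" "arc_tail M y = arc_head M z"
  shows "cyc_succ M C z = y"
  unfolding cyc_succ_def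
  using assms inj_onD[OF dcycle_seq_inj_tail[OF assms(1)]] by (intro the_equality) auto

lemma cyc_succ_cyc_nth:
  assumes "dcycle_seq E M C cs"
  shows "cyc_succ M C (cyc_nth cs j) = cyc_nth cs (j + 1)"
  using assms by (intro cyc_succ_eqI) (simp_all add: dcycle_seq_cyc_nth_in head_cyc_nth)

lemma funpow_cyc_succ_cyc_nth:
  assumes "dcycle_seq E M C cs"
  shows "(cyc_succ M C ^^ t) (cyc_nth cs j) = cyc_nth cs (j + int t)"
  by (induction t) (simp_all add: cyc_succ_cyc_nth[OF assms] ac_simps)

lemma cyc_succ_in:
  assumes "dcycle_seq E M C cs" "z \<in> C"
  shows "cyc_succ M C z \<in> C" "arc_tail M (cyc_succ M C z) = arc_head M z"
proof -
  have "z \<in> set cs"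
    using assms by (simp add: dcycle_seq_def)
  then obtain j where "cyc_nth cs j = z"
    by (rule obtain_cyc_nth)
  then show "cyc_succ M C z \<in> C" "arc_tail M (cyc_succ M C z) = arc_head M z"
    using assms(1) by (auto simp: cyc_succ_cyc_nth dcycle_seq_cyc_nth_in head_cyc_nth)
qed

lemma cyc_seg_cyc_nth:
  assumes "dcycle_seq E M C cs"
  shows "cyc_seg M C (cyc_nth cs i) (cyc_nth cs j) =
           cyc_range cs i (i + (j - i) mod int (length cs) + 1)"
proof -
  let ?L = "int (length cs)"
  let ?K = "(j - i) mod ?L"
  have cs: "distinct cs" "cs \<noteq> []"
    using assms by (auto simp: dcycle_seq_def dpath_seq_def distinct_map)
  then have K: "0 \<le> ?K"
    by simp
  have hit: "(cyc_succ M C ^^ t) (cyc_nth cs i) = cyc_nth cs j \<longleftrightarrow> int t mod ?L = ?K" for t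
    by (simp add: funpow_cyc_succ_cyc_nth[OF assms] cyc_nth_eq_iff[OF cs] mod_eq_dvd_iff
        algebra_simps)
  have "(LEAST t. (cyc_succ M C ^^ t) (cyc_nth cs i) = cyc_nth cs j) = nat ?K"
  proof (rule Least_equality)
    show "(cyc_succ M C ^^ nat ?K) (cyc_nth cs i) = cyc_nth cs j"
      using K by (simp add: hit)
    show "nat ?K \<le> t" if "(cyc_succ M C ^^ t) (cyc_nth cs i) = cyc_nth cs j" for t
      using that cs by (simp add: hit) (metis nat_int nat_mono of_nat_0_le_iff zmod_le_nonneg_dividend)
  qed
  moreover have "{cyc_nth cs (i + int t) | t. t \<le> nat ?K} = cyc_range cs i (i + ?K + 1)"
  proof -
    have "{i..<i + ?K + 1} = (\<lambda>t. i + int t) ` {..nat ?K}"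
    proof (intro equalityI subsetI)
      fix x
      assume "x \<in> {i..<i + ?K + 1}"
      then show "x \<in> (\<lambda>t. i + int t) ` {..nat ?K}"
        by (intro image_eqI[where x = "nat (x - i)"]) auto
    qed (use K in auto)
    then show ?thesis
      unfolding cyc_range_def by auto
  qed
  ultimately show ?thesis
    unfolding cyc_seg_def by (simp add: funpow_cyc_succ_cyc_nth[OF assms])
qed

lemma cyc_seg_cyc_nth_window:
  assumes "dcycle_seq E M C cs" "i \<le> j" "j < i + int (length cs)"
  shows "cyc_seg M C (cyc_nth cs i) (cyc_nth cs j) = cyc_range cs i (j + 1)"
proof -
  have "(j - i) mod int (length cs) = j - i"
    using assms(2,3) by simp
  then show ?thesis
    by (simp add: cyc_seg_cyc_nth[OF assms(1)])
qed

lemma dcycle_seq_subsetI: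
  assumes C: "dcycle_seq E M C cs" and "x \<in> C" "x \<in> D"
    and "\<And>z. z \<in> C \<Longrightarrow> z \<in> D \<Longrightarrow> cyc_succ M C z \<in> D"
  shows "C \<subseteq> D"
proof
  fix y
  assume "y \<in> C"
  have "(cyc_succ M C ^^ t) x \<in> C \<and> (cyc_succ M C ^^ t) x \<in> D" for t
    by (induction t) (use assms cyc_succ_in[OF C] in auto)
  moreover obtain t where "(cyc_succ M C ^^ t) x = y"
  proof -
    have "x \<in> set cs" "y \<in> set cs"
      using C \<open>x \<in> C\<close> \<open>y \<in> C\<close> by (simp_all add: dcycle_seq_def)
    obtain j where j: "cyc_nth cs j = x"
      using \<open>x \<in> set cs\<close> by (rule obtain_cyc_nth)
    obtain j' where "j \<le> j'" "j' < j + int (length cs)" "cyc_nth cs j' = y"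
      using \<open>y \<in> set cs\<close> by (rule obtain_cyc_nth_in_window)
    then show thesis
      using j that funpow_cyc_succ_cyc_nth[OF C, of "nat (j' - j)" j] by simp
  qed
  ultimately show "y \<in> D"
    by blast
qed

lemma dcycle_subset_through_path:
  assumes C: "dcycle E M C" and C': "dcycle E M C'"
    and within: "C \<subseteq> Cp \<union> Q" "C' \<subseteq> Cp \<union> Q" and through: "Q \<subseteq> C" "Q \<subseteq> C'"
    and "Q \<noteq> {}" and inj: "inj_on (arc_tail M) Cp"
  shows "C \<subseteq> C'"
proof -
  obtain cs cs' where cs: "dcycle_seq E M C cs" and cs': "dcycle_seq E M C' cs'"
    using C C' by (auto simp: dcycle_iff_dcycle_seq)
  obtain x where "x \<in> Q"
    using \<open>Q \<noteq> {}\<close> by blast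
  show ?thesis
  proof (rule dcycle_seq_subsetI[OF cs])
    show "x \<in> C" "x \<in> C'"
      using \<open>x \<in> Q\<close> through by auto
    fix z
    assume "z \<in> C" "z \<in> C'"
    define y y' where "y = cyc_succ M C z" and "y' = cyc_succ M C' z"
    have y: "y \<in> C" "y' \<in> C'" "arc_tail M y = arc_tail M y'"
      using cyc_succ_in[OF cs \<open>z \<in> C\<close>] cyc_succ_in[OF cs' \<open>z \<in> C'\<close>]
      by (simp_all add: y_def y'_def)
    consider "y \<in> Q" | "y' \<in> Q" | "y \<in> Cp" "y' \<in> Cp"
      using y within by blast
    then have "y = y'"
    proof cases
      case 1
      then show ?thesis
        using through inj_onD[OF dcycle_seq_inj_tail[OF cs'] y(3)] y(2) by blast
    next
      case 2
      then show ?thesis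
        using through inj_onD[OF dcycle_seq_inj_tail[OF cs] y(3)] y(1) by blast
    next
      case 3
      then show ?thesis
        using inj_onD[OF inj y(3)] by blast
    qed
    then show "cyc_succ M C z \<in> C'"
      using y by (simp add: y_def)
  qed
qed

lemma dcycle_unique:
  assumes "dcycle E M C1" "dcycle E M C2" "C1 \<subseteq> Cp \<union> Q" "C2 \<subseteq> Cp \<union> Q"
    and "Q \<subseteq> C1" "Q \<subseteq> C2" "Q \<noteq> {}" "inj_on (arc_tail M) Cp"
  shows "C1 = C2"
  using dcycle_subset_through_path[OF assms(1,2,3,4,5,6,7,8)]
    dcycle_subset_through_path[OF assms(2,1,4,3,6,5,7,8)] by (rule subset_antisym)

lemma dpath_seq_cyc_slice:
  assumes C: "dcycle_seq E M C cs" and "i < j" "j \<le> i + int (length cs)"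
  shows "dpath_seq E M (cyc_slice cs i j)"
  unfolding dpath_seq_def
proof (intro conjI)
  show "cyc_slice cs i j \<noteq> []"
    using \<open>i < j\<close> by (simp add: cyc_slice_def)
  have "C \<subseteq> E"
    using C by (auto simp: dcycle_seq_def dpath_seq_def)
  then show "set (cyc_slice cs i j) \<subseteq> E"
    unfolding set_cyc_slice using dcycle_seq_cyc_range_subset[OF C] by blast
  have "inj_on (arc_tail M \<circ> cyc_nth cs) {i..j - 1}"
    using assms by (intro inj_onI) (auto intro: tail_cyc_nth_inj[OF C])
  then show "distinct (map (arc_tail M) (cyc_slice cs i j))"
    by (simp add: cyc_slice_def distinct_map)
  have "successively (\<lambda>s t. t = s + 1) [i..j - 1]"
    by (simp add: successively_conv_nth)
  then show "successively (\<lambda>x y. arc_head M x = arc_tail M y) (cyc_slice cs i j)"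
    unfolding cyc_slice_def successively_map
    by (rule successively_mono) (simp add: head_cyc_nth[OF C])
qed

lemma dcycle_seq_append:
  assumes "dpath_seq E M ps" "dpath_seq E M qs"
    and "arc_head M (last ps) = arc_tail M (hd qs)" "arc_head M (last qs) = arc_tail M (hd ps)"
    and "arc_tail M ` set ps \<inter> arc_tail M ` set qs = {}"
  shows "dcycle_seq E M (set ps \<union> set qs) (ps @ qs)"
  using assms unfolding dcycle_seq_def dpath_seq_def by (auto simp: successively_append_iff)

section \<open>Jumps and their cycles\<close>

lemma dcycle_seq_path_then_arcs:
  assumes Cp: "dcycle_seq E M Cp cp" and qs: "dpath_seq E M qs"
    and inner: "\<And>q. q \<in> set qs \<Longrightarrow> arc_tail M q \<in> arc_tail M ` Cp \<Longrightarrow> q = hd qs"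
    and tail_hd: "arc_tail M (hd qs) = arc_tail M (cyc_nth cp a)"
    and head_last: "arc_head M (last qs) = arc_tail M (cyc_nth cp b)"
    and ba: "b < a" "a < b + int (length cp)"
  shows "dcycle_seq E M (set qs \<union> cyc_range cp b a) (qs @ cyc_slice cp b a)"
proof -
  have arcs: "dpath_seq E M (cyc_slice cp b a)"
    using dpath_seq_cyc_slice[OF Cp] ba by simp
  have "arc_tail M ` set qs \<inter> arc_tail M ` set (cyc_slice cp b a) = {}"
  proof -
    have False if "q \<in> set qs" "b \<le> t" "t < a" "arc_tail M q = arc_tail M (cyc_nth cp t)" for q t
    proof -
      have "q = hd qs"
        using inner that dcycle_seq_cyc_nth_in[OF Cp] by blast
      then have "a = t"
        using that ba tail_hd by (intro tail_cyc_nth_inj[OF Cp]) auto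
      then show False
        using \<open>t < a\<close> by simp
    qed
    then show ?thesis
      by (fastforce simp: set_cyc_slice cyc_range_def)
  qed
  moreover have "arc_head M (last (cyc_slice cp b a)) = arc_tail M (hd qs)"
    using head_cyc_nth[OF Cp, of "a - 1"] ba tail_hd by (simp add: last_cyc_slice)
  ultimately show ?thesis
    using dcycle_seq_append[OF qs arcs] head_last ba by (simp add: hd_cyc_slice set_cyc_slice)
qed

lemma jump_cycle_eq:
  assumes Cp: "dcycle_seq E M Cp cp" and qs: "dpath_seq E M qs"
    and "\<And>q. q \<in> set qs \<Longrightarrow> arc_tail M q \<in> arc_tail M ` Cp \<Longrightarrow> q = hd qs"
    and "arc_tail M (hd qs) = arc_tail M (cyc_nth cp a)"
    and "arc_head M (last qs) = arc_tail M (cyc_nth cp b)"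
    and "b < a" "a < b + int (length cp)"
  shows "jump_cycle E M Cp (set qs) = set qs \<union> cyc_range cp b a"

  unfolding jump_cycle_def
proof (rule the_equality)
  let ?T = "set qs \<union> cyc_range cp b a"
  have T: "dcycle E M ?T"
    using dcycle_seq_path_then_arcs[OF assms] by (auto simp: dcycle_iff_dcycle_seq)
  have within: "?T \<subseteq> Cp \<union> set qs"
    using dcycle_seq_cyc_range_subset[OF Cp] by blast
  then show "dcycle E M ?T \<and> ?T \<subseteq> Cp \<union> set qs \<and> set qs \<subseteq> ?T"
    using T by blast
  have "set qs \<noteq> {}"
    using qs by (simp add: dpath_seq_def)
  then show "C = ?T" if "dcycle E M C \<and> C \<subseteq> Cp \<union> set qs \<and> set qs \<subseteq> C" for C
    using that dcycle_unique[of E M C ?T Cp "set qs"] T within dcycle_seq_inj_tail[OF Cp] by blast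
qed

lemma jump_cycle_cyc_range:
  assumes Cp: "dcycle_seq E M Cp cp" and Ce: "dcycle_seq E M Ce ce"
    and ij: "i < j" "j \<le> i + int (length ce)"
    and inner: "\<And>t. i < t \<Longrightarrow> t < j \<Longrightarrow> arc_tail M (cyc_nth ce t) \<notin> arc_tail M ` Cp"
    and start: "arc_tail M (cyc_nth ce i) = arc_tail M (cyc_nth cp a)"
    and stop: "arc_tail M (cyc_nth ce j) = arc_tail M (cyc_nth cp b)"
    and ba: "b < a" "a < b + int (length cp)"
  shows "jump_cycle E M Cp (cyc_range ce i j) = cyc_range ce i j \<union> cyc_range cp b a"
proof -
  have "jump_cycle E M Cp (set (cyc_slice ce i j)) = set (cyc_slice ce i j) \<union> cyc_range cp b a"
  proof (rule jump_cycle_eq[OF Cp _ _ _ _ ba])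
    show "dpath_seq E M (cyc_slice ce i j)"
      using ij by (rule dpath_seq_cyc_slice[OF Ce])
    show "q = hd (cyc_slice ce i j)"
      if "q \<in> set (cyc_slice ce i j)" "arc_tail M q \<in> arc_tail M ` Cp" for q
      using that inner ij(1) by (force simp: set_cyc_slice cyc_range_def hd_cyc_slice)
    show "arc_tail M (hd (cyc_slice ce i j)) = arc_tail M (cyc_nth cp a)"
      using start ij(1) by (simp add: hd_cyc_slice)
    show "arc_head M (last (cyc_slice ce i j)) = arc_tail M (cyc_nth cp b)"
      using head_cyc_nth[OF Ce, of "j - 1"] ij(1) stop by (simp add: last_cyc_slice)
  qed
  then show ?thesis
    by (simp add: set_cyc_slice)
qed

lemma is_jump_cyc_range:
  assumes Ce: "dcycle_seq E M Ce ce" and ij: "i < j" "j \<le> i + int (length ce)"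
    and ends: "arc_tail M (cyc_nth ce i) \<in> verts Cp" "arc_tail M (cyc_nth ce j) \<in> verts Cp"
    and inner: "\<And>t. i < t \<Longrightarrow> t < j \<Longrightarrow> arc_tail M (cyc_nth ce t) \<notin> verts Cp"
    and disjoint: "cyc_range ce i j \<inter> Cp = {}"
  shows "is_jump M Cp Ce (cyc_range ce i j)"
  unfolding is_jump_def
proof (intro exI conjI)
  let ?y = "cyc_nth ce (j - 1)"
  show "cyc_range ce i j = cyc_seg M Ce (cyc_nth ce i) ?y"
    using cyc_seg_cyc_nth_window[OF Ce, of i "j - 1"] ij by simp

  show "arc_head M ?y \<in> verts Cp"
    using ends(2) head_cyc_nth[OF Ce, of "j - 1"] by simp
  show "\<forall>z\<in>cyc_range ce i j - {?y}. arc_head M z \<notin> verts Cp"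
  proof
    fix z
    assume "z \<in> cyc_range ce i j - {?y}"
    then obtain t where t: "i \<le> t" "t < j" "z = cyc_nth ce t" and "z \<noteq> ?y"
      by (auto simp: cyc_range_def)
    then have "t + 1 < j"
      by (cases "t = j - 1") auto
    with t show "arc_head M z \<notin> verts Cp"
      using inner[of "t + 1"] head_cyc_nth[OF Ce, of t] by simp
  qed
qed (use Ce ends disjoint dcycle_seq_cyc_nth_in in auto)

lemma obtain_next_jump:
  assumes Cp: "dcycle_seq E M Cp cp" and Ce: "dcycle_seq E M Ce ce"
    and im: "i < m" "m < i + int (length ce)"
    and "cyc_nth ce m \<in> Cp" "cyc_nth ce i \<notin> Cp"
    and start: "arc_tail M (cyc_nth ce i) = arc_tail M (cyc_nth cp a)"
  obtains j b where "i < j" "j \<le> m" "b < a" "a < b + int (length cp)"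
    "arc_tail M (cyc_nth ce j) = arc_tail M (cyc_nth cp b)"
    "is_jump M Cp Ce (cyc_range ce i j)" "cyc_range ce i j \<inter> Cp = {}"
    "jump_cycle E M Cp (cyc_range ce i j) = cyc_range ce i j \<union> cyc_range cp b a"
proof -
  let ?on = "\<lambda>t. arc_tail M (cyc_nth ce t) \<in> arc_tail M ` Cp"
  obtain j where j: "i < j" "j \<le> m" "?on j" and inner: "\<And>t. i < t \<Longrightarrow> t < j \<Longrightarrow> \<not> ?on t"
    using obtain_first_hit[of i m ?on] im \<open>cyc_nth ce m \<in> Cp\<close> by blast
  obtain x where x: "x \<in> Cp" "arc_tail M (cyc_nth ce j) = arc_tail M x"
    using j(3) by auto
  have "x \<in> set cp"
    using Cp x(1) by (simp add: dcycle_seq_def)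
  moreover have "x \<noteq> cyc_nth cp a"
  proof
    assume "x = cyc_nth cp a"
    then have "j = i"
      using x start j im by (intro tail_cyc_nth_inj[OF Ce]) auto
    then show False
      using j(1) by simp
  qed
  ultimately obtain b where b: "b < a" "a < b + int (length cp)" "cyc_nth cp b = x"
    by (rule obtain_cyc_nth_before)
  have disjoint: "cyc_range ce i j \<inter> Cp = {}"
    using inner \<open>cyc_nth ce i \<notin> Cp\<close> by (force simp: cyc_range_def)
  have "is_jump M Cp Ce (cyc_range ce i j)"
    using Ce j im inner disjoint start dcycle_seq_cyc_nth_in[OF Cp]
    by (intro is_jump_cyc_range) (auto simp: dcycle_seq_verts[OF Cp])
  moreover have "jump_cycle E M Cp (cyc_range ce i j) = cyc_range ce i j \<union> cyc_range cp b a"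
    using j im x b by (intro jump_cycle_cyc_range[OF Cp Ce _ _ inner start]) auto
  ultimately show thesis
    using that j(1,2) b x(2) disjoint by simp
qed

section \<open>Walking along C_e\<close>

lemma inter_subset_reach_f: "P \<inter> Cp \<subseteq> reach_f E red M Cp Ce P"
  by (auto simp: reach_f_def)

lemma reach_subset_reach_f:
  "is_jump M Cp Ce Q \<Longrightarrow> Q \<subseteq> P \<Longrightarrow> forward_jump E red M Cp Q \<Longrightarrow>
     reach E red M Cp Q \<subseteq> reach_f E red M Cp Ce P"
  unfolding reach_f_def by blast

lemma reach_subset_reach_b:
  "is_jump M Cp Ce Q \<Longrightarrow> Q \<subseteq> P \<Longrightarrow> \<not> forward_jump E red M Cp Q \<Longrightarrow>
     reach E red M Cp Q \<subseteq> reach_b E red M Cp Ce P"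
  unfolding reach_b_def by blast

lemma reach_eq_cyc_range:
  assumes Cp: "dcycle_seq E M Cp cp"
    and cycle: "jump_cycle E M Cp Q = Q \<union> cyc_range cp b a" and disjoint: "Q \<inter> Cp = {}"
    and ba: "b < a" "a < b + int (length cp)"
  shows "forward_jump E red M Cp Q \<Longrightarrow> reach E red M Cp Q = cyc_range cp a (b + int (length cp))"
    and "\<not> forward_jump E red M Cp Q \<Longrightarrow> reach E red M Cp Q = cyc_range cp b a"
proof -
  assume "forward_jump E red M Cp Q"
  then have "reach E red M Cp Q = Cp - cyc_range cp b a"
    using cycle disjoint by (auto simp: reach_def)
  also have "\<dots> = cyc_range cp a (b + int (length cp))"
    using Cp ba cyc_range_complement[of cp b a]
    by (auto simp: dcycle_seq_def dpath_seq_def distinct_map)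
  finally show "reach E red M Cp Q = cyc_range cp a (b + int (length cp))" .
next
  assume "\<not> forward_jump E red M Cp Q"
  then show "reach E red M Cp Q = cyc_range cp b a"
    using cycle disjoint dcycle_seq_cyc_range_subset[OF Cp, of b a] by (auto simp: reach_def)
qed

lemma reach_walk_step:
  assumes Cp: "dcycle_seq E M Cp cp" and Ce: "dcycle_seq E M Ce ce"
    and im: "i < m" "m < i + int (length ce)"
    and "cyc_nth ce m \<in> Cp" and P: "cyc_range ce i (m + 1) \<subseteq> P"
    and start: "arc_tail M (cyc_nth ce i) = arc_tail M (cyc_nth cp a)"
  obtains j a' where "i < j" "j \<le> m" "arc_tail M (cyc_nth ce j) = arc_tail M (cyc_nth cp a')"
    "cyc_range cp a a' \<subseteq> reach_f E red M Cp Ce P" "cyc_range cp a' a \<subseteq> reach_b E red M Cp Ce P"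
proof (cases "cyc_nth ce i \<in> Cp")
  case True
  then have "cyc_nth ce i = cyc_nth cp a"
    using start dcycle_seq_inj_tail[OF Cp] dcycle_seq_cyc_nth_in[OF Cp] by (auto dest: inj_onD)
  moreover have "cyc_nth ce i \<in> P"
    using P im by (auto simp: cyc_range_def)
  ultimately have "cyc_range cp a (a + 1) \<subseteq> reach_f E red M Cp Ce P"
    using True inter_subset_reach_f by fastforce
  moreover have "arc_tail M (cyc_nth ce (i + 1)) = arc_tail M (cyc_nth cp (a + 1))"
    using head_cyc_nth[OF Ce, of i] head_cyc_nth[OF Cp, of a] \<open>cyc_nth ce i = cyc_nth cp a\<close> by simp
  ultimately show thesis
    using that[of "i + 1" "a + 1"] im by simp
next
  case False
  then obtain j b where j: "i < j" "j \<le> m" and b: "b < a" "a < b + int (length cp)"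
    and tail_j: "arc_tail M (cyc_nth ce j) = arc_tail M (cyc_nth cp b)"
    and jump: "is_jump M Cp Ce (cyc_range ce i j)" and disjoint: "cyc_range ce i j \<inter> Cp = {}"
    and cycle: "jump_cycle E M Cp (cyc_range ce i j) = cyc_range ce i j \<union> cyc_range cp b a"
    using obtain_next_jump[OF Cp Ce im \<open>cyc_nth ce m \<in> Cp\<close> _ start] by blast
  have QP: "cyc_range ce i j \<subseteq> P"
    using P j cyc_range_mono[of i i j "m + 1" ce] by simp
  show thesis
  proof (cases "forward_jump E red M Cp (cyc_range ce i j)")
    case True
    then show thesis
      using that[of j "b + int (length cp)"] j tail_j b reach_subset_reach_f[OF jump QP True]
        reach_eq_cyc_range(1)[OF Cp cycle disjoint b] by simp
  next
    case False
    then show thesis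
      using that[of j b] j tail_j b reach_subset_reach_b[OF jump QP False]
        reach_eq_cyc_range(2)[OF Cp cycle disjoint b] by simp
  qed
qed

lemma reach_walk:
  assumes Cp: "dcycle_seq E M Cp cp" and Ce: "dcycle_seq E M Ce ce"
    and "i \<le> m" "m < i + int (length ce)" "cyc_nth ce m \<in> Cp" "cyc_range ce i (m + 1) \<subseteq> P"
    and "arc_tail M (cyc_nth ce i) = arc_tail M (cyc_nth cp a)"
  shows "\<exists>c. arc_tail M (cyc_nth cp c) = arc_tail M (cyc_nth ce m) \<and>
    cyc_range cp a c \<subseteq> reach_f E red M Cp Ce P \<and> cyc_range cp c a \<subseteq> reach_b E red M Cp Ce P"
  using assms(3-)
proof (induction "nat (m - i)" arbitrary: i a rule: less_induct)
  case less
  show ?case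
  proof (cases "i = m")
    case True
    then show ?thesis
      using less.prems(5) by (intro exI[of _ a]) simp
  next
    case False
    then have "i < m"
      using less.prems(1) by simp
    obtain j a' where j: "i < j" "j \<le> m"
      and tail_j: "arc_tail M (cyc_nth ce j) = arc_tail M (cyc_nth cp a')"
      and F: "cyc_range cp a a' \<subseteq> reach_f E red M Cp Ce P"
      and B: "cyc_range cp a' a \<subseteq> reach_b E red M Cp Ce P"
      by (rule reach_walk_step[OF Cp Ce \<open>i < m\<close> less.prems(2-5)])
    have "cyc_range ce j (m + 1) \<subseteq> P"
      using less.prems(4) cyc_range_mono[of i j "m + 1" "m + 1" ce] j by simp
    then obtain c where c: "arc_tail M (cyc_nth cp c) = arc_tail M (cyc_nth ce m)"
      "cyc_range cp a' c \<subseteq> reach_f E red M Cp Ce P" "cyc_range cp c a' \<subseteq> reach_b E red M Cp Ce P"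
      using less.hyps[of j a'] j less.prems(2,3) tail_j by auto
    show ?thesis
      using c F B cyc_range_subset_union[of cp a c a'] cyc_range_subset_union[of cp c a a']
      by blast
  qed
qed

lemma cyc_seg_cover:
  assumes Cp: "dcycle_seq E M Cp cp"
    and sf: "s < f" "f < s + int (length cp)" and c: "c mod int (length cp) = f mod int (length cp)"
    and F: "cyc_range cp (s + 1) c \<subseteq> F" "cyc_nth cp s \<in> F" "cyc_nth cp f \<in> F"
    and B: "cyc_range cp c (s + 1) \<subseteq> B"
  shows "cyc_seg M Cp (cyc_nth cp s) (cyc_nth cp f) \<subseteq> F \<or>
         cyc_seg M Cp (cyc_nth cp f) (cyc_nth cp s) \<subseteq> B"
proof (cases "s < c")
  case True
  then have "f \<le> c"
    using mod_eq_in_window(1)[OF c sf] by simp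
  have "cyc_seg M Cp (cyc_nth cp s) (cyc_nth cp f) = cyc_range cp s (f + 1)"
    using sf by (simp add: cyc_seg_cyc_nth_window[OF Cp])
  also have "\<dots> \<subseteq> cyc_range cp s (s + 1) \<union> cyc_range cp (s + 1) f \<union> cyc_range cp f (f + 1)"
    using cyc_range_subset_union[of cp s "f + 1" "s + 1"] cyc_range_subset_union[of cp "s + 1" "f + 1" f]
    by blast
  also have "\<dots> \<subseteq> F"
    using F cyc_range_mono[of "s + 1" "s + 1" f c cp] \<open>f \<le> c\<close> by simp
  finally show ?thesis
    by blast
next
  case False
  then have "c \<le> f - int (length cp)"
    using mod_eq_in_window(2)[OF c sf] by simp
  have "(s - f) mod int (length cp) = (s - f + int (length cp)) mod int (length cp)"
    by simp
  also have "\<dots> = s - f + int (length cp)"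
    using sf by (intro mod_pos_pos_trivial) auto
  finally have "cyc_seg M Cp (cyc_nth cp f) (cyc_nth cp s) =
      cyc_range cp (f - int (length cp) + int (length cp)) (s + 1 + int (length cp))"
    by (simp add: cyc_seg_cyc_nth[OF Cp] algebra_simps)
  also have "\<dots> = cyc_range cp (f - int (length cp)) (s + 1)"
    by (rule cyc_range_add_length)
  also have "\<dots> \<subseteq> B"
    using B cyc_range_mono[of c "f - int (length cp)" "s + 1" "s + 1" cp] \<open>c \<le> f - int (length cp)\<close>
    by simp
  finally show ?thesis
    by blast
qed

theorem lemma5:
  fixes A B :: "'v set" and E red Mstar M Me Cp Ce :: "('v \<times> 'v) set"
    and k :: nat and e es ef :: "'v \<times> 'v"
  assumes crit: "critical A B E red k Mstar M"
    and Cp_cycle: "dcycle E M Cp"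
    and Cp_sub: "Cp \<subseteq> (M - Mstar) \<union> (Mstar - M)"
    and Cp_pos: "wM red M Cp > 0"
    and e_in: "e \<in> Eplus red M Cp"
    and Me: "is_Me A B E red e Me"
    and Ce_cycle: "dcycle E M Ce"
    and Ce_sub: "Ce \<subseteq> (M - Me) \<union> (Me - M)"
    and e_Ce: "e \<in> Ce"
    and es_Cp: "es \<in> Cp" and ef_Cp: "ef \<in> Cp"
    and es_Ce: "es \<in> Ce" and ef_Ce: "ef \<in> Ce"
    and es_ef: "es \<noteq> ef"
  shows "cyc_seg M Cp es ef \<subseteq> reach_f E red M Cp Ce (cyc_seg M Ce es ef)
       \<or> cyc_seg M Cp ef es \<subseteq> reach_b E red M Cp Ce (cyc_seg M Ce es ef)"
proof -
  obtain cp ce where Cp: "dcycle_seq E M Cp cp" and Ce: "dcycle_seq E M Ce ce"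
    using Cp_cycle Ce_cycle by (auto simp: dcycle_iff_dcycle_seq)
  have "set cp = Cp" "set ce = Ce"
    using Cp Ce by (simp_all add: dcycle_seq_def)
  then obtain s f s' m
    where s: "cyc_nth cp s = es" and f: "s < f" "f < s + int (length cp)" "cyc_nth cp f = ef"
      and s': "cyc_nth ce s' = es" and m: "s' < m" "m < s' + int (length ce)" "cyc_nth ce m = ef"
    using obtain_cyc_nth_pair es_Cp ef_Cp es_Ce ef_Ce es_ef by metis
  define P where "P = cyc_seg M Ce es ef"
  have P_eq: "P = cyc_range ce s' (m + 1)"
    using cyc_seg_cyc_nth_window[OF Ce, of s' m] m s' by (simp add: P_def)
  \<comment> \<open>The walk starts just after e_s, so that e_s is passed backward if the walk ends behind it.\<close>
  have "arc_tail M (cyc_nth ce (s' + 1)) = arc_tail M (cyc_nth cp (s + 1))"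

    using head_cyc_nth[OF Ce, of s'] head_cyc_nth[OF Cp, of s] s s' by simp
  then obtain c where c: "arc_tail M (cyc_nth cp c) = arc_tail M (cyc_nth ce m)"
    "cyc_range cp (s + 1) c \<subseteq> reach_f E red M Cp Ce P"
    "cyc_range cp c (s + 1) \<subseteq> reach_b E red M Cp Ce P"
    using reach_walk[OF Cp Ce, where i = "s' + 1" and m = m and P = P and a = "s + 1" and red = red]
      m ef_Cp P_eq cyc_range_mono[of s' "s' + 1" "m + 1" "m + 1" ce]
    by auto
  have "es \<in> P" "ef \<in> P"
    using P_eq s' m by (auto simp: cyc_range_def)
  then have "es \<in> reach_f E red M Cp Ce P" "ef \<in> reach_f E red M Cp Ce P"
    using es_Cp ef_Cp inter_subset_reach_f by blast+
  moreover have "c mod int (length cp) = f mod int (length cp)"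
    using c(1) m(3) f(3) by (intro tail_cyc_nth_eq_imp_mod_eq[OF Cp]) simp
  ultimately show ?thesis
    using cyc_seg_cover[OF Cp f(1,2)] c(2,3) s f(3) by (simp add: P_def)
qed

end
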